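(* Let $A$ be an evolution algebra over a commutative ring $R$ with finite basis $\{x_1,\dots,x_N\}$ and structure coefficients $c_{ki}$ (so $x_i^2=\sum_{k=1}^N c_{ki}x_k$ and $x_ix_j=0$ for $i\neq j$). If $A$ is nil, then for each $1\le i\le N$ there exists a positive integer $k_i$ such that $c_{ii}^{k_i}=0$ in $R$.
   Context: An evolution algebra over a commutative ring $R$ is a free $R$-module $A$ with basis $\{x_i : i\in I\}$ equipped with the $R$-bilinear multiplication determined by $x_ix_j=0$ for $i\ne j$ and $x_i^2=\sum_{k\in I}c_{ki}x_k$ with $c_{ki}\in R$ (finitely many nonzero for each $i$); the $c_{ki}$ are the structure coefficients. The multiplication is commutative but not assumed associative. Principal powers of $a\in A$ are $a^1=a$, $a^n=a^{n-1}a$ for $n\ge 2$. $A$ is nil if for every $a\in A$ there is $n\in\mathbb{N}$ with $a^n=0$. *)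

theory Defs
  imports Main
begin

text \<open>An evolution algebra over a commutative ring 'r with finite basis indexed by the
finite type 'n.  Elements are coordinate vectors 'n \<Rightarrow> 'r (the free module with basis
x_i = indicator of i).  C k i is the structure coefficient c_{ki}, i.e.
x_i^2 = sum_k C k i x_k and x_i x_j = 0 for i ~= j.  Bilinear extension gives
(a b)_k = sum_i a_i b_i c_{ki}.\<close>

definition evo_mult :: "('n::finite \<Rightarrow> 'n \<Rightarrow> 'r::comm_ring_1) \<Rightarrow> ('n \<Rightarrow> 'r) \<Rightarrow> ('n \<Rightarrow> 'r) \<Rightarrow> ('n \<Rightarrow> 'r)"
  where "evo_mult C a b = (\<lambda>k. \<Sum>i\<in>UNIV. a i * b i * C k i)"

text \<open>Principal powers: evo_pow C a 1 = a, evo_pow C a (n+1) = (evo_pow C a n) a for n >= 1.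
The value at 0 is an irrelevant convention (a^0 is not used).\<close>

primrec evo_pow :: "('n::finite \<Rightarrow> 'n \<Rightarrow> 'r::comm_ring_1) \<Rightarrow> ('n \<Rightarrow> 'r) \<Rightarrow> nat \<Rightarrow> ('n \<Rightarrow> 'r)"
  where
    "evo_pow C a 0 = a"
  | "evo_pow C a (Suc n) = (if n = 0 then a else evo_mult C (evo_pow C a n) a)"

definition evo_nil :: "('n::finite \<Rightarrow> 'n \<Rightarrow> 'r::comm_ring_1) \<Rightarrow> bool"
  where "evo_nil C \<longleftrightarrow> (\<forall>a. \<exists>n\<ge>1. evo_pow C a n = (\<lambda>_. 0))"

end

theory Submission
  imports Defs
begin

(* Let x_i be the i-th basis vector.  Multiplying any element a on
   the right by x_i only sees the i-th coordinate of a:  (a x_i)_k = a_i c_{ki}.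
   Hence, by induction, the i-th coordinate of the principal power x_i^(n+1) is c_{ii}^n.
   If A is nil, some power x_i^n with n >= 1 vanishes; reading off its i-th coordinate
   gives c_{ii}^(n-1) = 0, and therefore c_{ii}^n = 0 with n > 0.
   The file first introduces the basis vectors, then computes products with a basis
   vector, then the diagonal coordinate of the powers of x_i, and finally derives the
   theorem. *)

definition evo_basis :: "'n \<Rightarrow> ('n \<Rightarrow> 'r::comm_ring_1)"
  where "evo_basis i = (\<lambda>j. if j = i then 1 else 0)"

lemma evo_mult_basis_right:
  fixes C :: "'n::finite \<Rightarrow> 'n \<Rightarrow> 'r::comm_ring_1"
  shows "evo_mult C a (evo_basis i) k = a i * C k i"
proof -
  have "evo_mult C a (evo_basis i) k = (\<Sum>j\<in>UNIV. if j = i then a j * C k j else 0)"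
    unfolding evo_mult_def evo_basis_def by (rule sum.cong) auto
  also have "\<dots> = a i * C k i" by simp
  finally show ?thesis .
qed

lemma evo_pow_basis_diag:
  fixes C :: "'n::finite \<Rightarrow> 'n \<Rightarrow> 'r::comm_ring_1"
  shows "evo_pow C (evo_basis i) (Suc n) i = C i i ^ n"
proof (induction n)
  case 0
  show ?case by (simp add: evo_basis_def)
next
  case (Suc n)
  have "evo_pow C (evo_basis i) (Suc (Suc n)) i
      = evo_mult C (evo_pow C (evo_basis i) (Suc n)) (evo_basis i) i"
    by simp
  also have "\<dots> = evo_pow C (evo_basis i) (Suc n) i * C i i"
    by (rule evo_mult_basis_right)
  also have "\<dots> = C i i ^ Suc n"
    using Suc.IH by (simp add: mult.commute)
  finally show ?case .
qed

theorem lemma2p4: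
  fixes C :: "'n::finite \<Rightarrow> 'n \<Rightarrow> 'r::comm_ring_1"
  assumes "evo_nil C"
  shows "\<forall>i. \<exists>k::nat. k > 0 \<and> (C i i) ^ k = 0"
proof
  fix i
  obtain n where "n \<ge> 1" and vanishes: "evo_pow C (evo_basis i) n = (\<lambda>_. 0)"
    using assms unfolding evo_nil_def by blast
  then obtain m where n: "n = Suc m" by (cases n) auto
  have "C i i ^ m = 0"
    using evo_pow_basis_diag[of C i m] vanishes n by simp
  then have "C i i ^ Suc m = 0" by simp
  then show "\<exists>k::nat. k > 0 \<and> (C i i) ^ k = 0" by blast
qed

end
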